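(* Let $\mathcal{P}$ be an arbitrary set of prime numbers (finite or infinite), and let $\langle \mathcal{P} \rangle \subset \mathbb{N} = \{1,2,3,\ldots\}$ denote the set of natural numbers all of whose prime factors lie in $\mathcal{P}$ (in particular $1 \in \langle \mathcal{P}\rangle$). Then for every real number $x$, $$\Big|\sum_{n \in \langle \mathcal{P} \rangle:\, n \leq x} \frac{\mu(n)}{n}\Big| \leq 1.$$
   Context: $\mu$ denotes the Möbius function: $\mu(n) = (-1)^k$ if $n$ is a product of $k$ distinct primes, and $\mu(n)=0$ otherwise. $\langle \mathcal{P}\rangle$ is the multiplicative semigroup generated by $\mathcal{P}$ (including $1$ as the empty product). *)

theory Defs
  imports "HOL-Computational_Algebra.Computational_Algebra"
begin

definition moebius :: "nat \<Rightarrow> int" where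
  "moebius n = (if n > 0 \<and> squarefree n then (-1) ^ card (prime_factors n) else 0)"

definition gen_semigroup :: "nat set \<Rightarrow> nat set" where
  "gen_semigroup P = {n. n > 0 \<and> prime_factors n \<subseteq> P}"

end

theory Submission
  imports Defs
begin

text \<open>Let \<open>N = \<lfloor>x\<rfloor>\<close>, let \<open>B\<close> be the elements of \<open>\<langle>P\<rangle>\<close> up to \<open>N\<close>, and \<open>C\<close> the
  numbers in \<open>[1, N]\<close> without prime factors in \<open>P\<close>. Summing the identity
  \<open>\<Sum>{\<mu>(d) | d dvd m, d \<in> \<langle>P\<rangle>} = [m \<in> C]\<close> over \<open>m \<le> N\<close> gives \<open>\<Sum>{\<mu>(n) \<lfloor>N/n\<rfloor> | n \<in> B} = |C|\<close>.
  The fractional parts of \<open>N/n\<close> contribute at most \<open>|B| - 1\<close> in absolute value (the term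
  \<open>n = 1\<close> vanishes), so \<open>N \<Sum>{\<mu>(n)/n | n \<in> B}\<close> lies between \<open>-(|B| - 1)\<close> and
  \<open>|C| + |B| - 1\<close>. As \<open>B\<close> and \<open>C\<close> meet only in \<open>1\<close>, both bounds are at most \<open>N\<close> in
  absolute value.\<close>

lemma prime_factors_prod_primes:
  fixes S :: "nat set"
  assumes "finite S" "\<forall>p\<in>S. prime p"
  shows "prime_factors (\<Prod>S) = S" "squarefree (\<Prod>S)" "\<Prod>S > 0"
proof -
  have "0 \<notin> id ` S" using assms(2) by auto
  then show "prime_factors (\<Prod>S) = S"
    using prime_factors_prod[OF assms(1), of id] assms(2) by (auto simp: prime_prime_factors)
  show "squarefree (\<Prod>S)"
    using squarefree_prod_coprime[of S id] assms(2) by (auto simp: primes_coprime squarefree_prime)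
  show "\<Prod>S > 0" using assms(2) by (simp add: prime_gt_0_nat prod_pos)
qed

lemma moebius_prod_primes:
  assumes "finite S" "\<forall>p\<in>S. prime p"
  shows "moebius (\<Prod>S) = (-1) ^ card S"
  using prime_factors_prod_primes[OF assms] by (simp add: moebius_def)

lemma squarefree_eq_prod_prime_factors:
  fixes n :: nat
  assumes "squarefree n"
  shows "n = \<Prod>(prime_factors n)"
proof -
  have n0: "n > 0" using assms by (cases n) auto
  have "n = (\<Prod>p \<in> prime_factors n. p ^ multiplicity p n)"
    using prime_factorization_nat[OF n0] .
  also have "\<dots> = (\<Prod>p \<in> prime_factors n. p)"
    using assms n0 by (intro prod.cong) (auto simp: squarefree_factorial_semiring')
  finally show ?thesis by simp
qed

lemma prod_prime_factors_dvd:
  fixes m :: nat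
  assumes "m > 0"
  shows "\<Prod>(prime_factors m) dvd m"
proof -
  have "\<Prod>(prime_factors m) dvd (\<Prod>p \<in> prime_factors m. p ^ multiplicity p m)"
    by (intro prod_dvd_prod) (auto simp: prime_factors_multiplicity)
  then show ?thesis using prime_factorization_nat[OF assms] by simp
qed

lemma sum_Pow_neg_one_power_card:
  assumes "finite T"
  shows "(\<Sum>S\<in>Pow T. (-1) ^ card S :: int) = (if T = {} then 1 else 0)"
proof -
  have "(\<Sum>S\<in>Pow T. (-1) ^ card S :: int) = (\<Prod>x\<in>T. 1 - 1)"
    by (subst prod_diff_conv_sum[OF assms]) simp
  then show ?thesis using assms by (simp add: card_gt_0_iff)
qed

text \<open>The squarefree divisors of \<open>m\<close> supported on \<open>P\<close> are exactly the products of
  subsets of \<open>prime_factors m \<inter> P\<close>; all other divisors supported on \<open>P\<close> have \<open>\<mu> = 0\<close>.\<close>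

lemma sum_moebius_dvd_supported:
  fixes m :: nat
  assumes "m > 0"
  shows "(\<Sum>n | n dvd m \<and> prime_factors n \<subseteq> P. moebius n) =
         (if prime_factors m \<inter> P = {} then 1 else 0)"
proof -
  define T where "T = prime_factors m \<inter> P"
  define D where "D = {n. n dvd m \<and> prime_factors n \<subseteq> P}"
  have "finite T" unfolding T_def by auto
  have subset_T: "finite S \<and> (\<forall>p\<in>S. prime p)" if "S \<subseteq> T" for S
    using that \<open>finite T\<close> finite_subset unfolding T_def by auto
  have "finite D"
    unfolding D_def by (rule finite_subset[of _ "{..m}"]) (auto simp: dvd_imp_le assms)
  have products_in_D: "Prod ` Pow T \<subseteq> D"
  proof
    fix n assume "n \<in> Prod ` Pow T"
    then obtain S where S: "S \<subseteq> T" "n = \<Prod>S" by auto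
    have "\<Prod>S dvd \<Prod>(prime_factors m)"
      using S unfolding T_def by (intro prod_dvd_prod_subset) auto
    then have "n dvd m" using S prod_prime_factors_dvd[OF assms] dvd_trans by blast
    moreover have "prime_factors n \<subseteq> P"
      using prime_factors_prod_primes(1)[of S] subset_T[OF S(1)] S unfolding T_def by auto
    ultimately show "n \<in> D" unfolding D_def by simp
  qed
  have moebius_outside: "moebius n = 0" if "n \<in> D - Prod ` Pow T" for n
  proof (rule ccontr)
    assume "moebius n \<noteq> 0"
    then have "squarefree n" by (auto simp: moebius_def split: if_splits)
    moreover have "prime_factors n \<subseteq> T"
      using that assms dvd_prime_factors[of m n] unfolding T_def D_def by auto
    ultimately have "n \<in> Prod ` Pow T" using squarefree_eq_prod_prime_factors by auto
    then show False using that by auto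
  qed
  have "inj_on Prod (Pow T)"
    by (rule inj_onI) (metis PowD prime_factors_prod_primes(1) subset_T)
  have "(\<Sum>n\<in>D. moebius n) = (\<Sum>n \<in> Prod ` Pow T. moebius n)"
    using \<open>finite D\<close> products_in_D moebius_outside by (intro sum.mono_neutral_right) auto
  also have "\<dots> = (\<Sum>S \<in> Pow T. moebius (\<Prod>S))"
    using \<open>inj_on Prod (Pow T)\<close> by (simp add: sum.reindex)
  also have "\<dots> = (\<Sum>S \<in> Pow T. (-1) ^ card S)"
    using subset_T by (intro sum.cong) (auto simp: moebius_prod_primes)
  finally show ?thesis
    using sum_Pow_neg_one_power_card[OF \<open>finite T\<close>] unfolding D_def T_def by simp
qed

lemma card_multiples_atLeastAtMost:
  fixes n N :: nat
  assumes "n > 0"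
  shows "card {m\<in>{1..N}. n dvd m} = N div n"
proof -
  have "{m\<in>{1..N}. n dvd m} = (\<lambda>k. n * k) ` {1..N div n}"
  proof (rule set_eqI)
    fix m
    have bound: "n * k \<le> N \<longleftrightarrow> k \<le> N div n" for k
      using assms by (simp add: less_eq_div_iff_mult_less_eq mult.commute)
    show "m \<in> {m\<in>{1..N}. n dvd m} \<longleftrightarrow> m \<in> (\<lambda>k. n * k) ` {1..N div n}"
    proof
      assume "m \<in> {m\<in>{1..N}. n dvd m}"
      then obtain k where k: "m = n * k" "1 \<le> n * k" "n * k \<le> N" by (auto elim!: dvdE)
      then have "k \<in> {1..N div n}" using bound[of k] by (cases k) auto
      then show "m \<in> (\<lambda>k. n * k) ` {1..N div n}" unfolding k(1) by (rule imageI)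
    next
      assume "m \<in> (\<lambda>k. n * k) ` {1..N div n}"
      then obtain k where k: "m = n * k" "k \<in> {1..N div n}" by (erule imageE)
      then have "1 \<le> m" "m \<le> N" using bound[of k] assms by simp_all
      then show "m \<in> {m\<in>{1..N}. n dvd m}" using k(1) by simp
    qed
  qed
  moreover have "inj_on (\<lambda>k. n * k) {1..N div n}" using assms by (auto intro: inj_onI)
  ultimately show ?thesis by (simp add: card_image)
qed

lemma card_smooth_plus_card_coprime_le:
  fixes N :: nat
  shows "card ({n \<in> gen_semigroup P. n \<le> N} - {1}) + card {m\<in>{1..N}. prime_factors m \<inter> P = {}} \<le> N"
proof -
  let ?B = "{n \<in> gen_semigroup P. n \<le> N} - {1}" and ?C = "{m\<in>{1..N}. prime_factors m \<inter> P = {}}"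
  have "?B \<inter> ?C = {}"
  proof (rule equals0I)
    fix m assume "m \<in> ?B \<inter> ?C"
    then have "m \<noteq> 1" "m > 0" "prime_factors m = {}" by (auto simp: gen_semigroup_def)
    then show False
      using prime_factor_nat[of m] by (metis empty_iff in_prime_factors_iff not_gr0)
  qed
  then have "card ?B + card ?C = card (?B \<union> ?C)"
    by (intro card_Un_disjoint[symmetric]) auto
  also have "\<dots> \<le> card {1..N}"
    by (intro card_mono) (auto simp: gen_semigroup_def)
  finally show ?thesis by simp
qed

lemma sum_moebius_mult_div:
  fixes N :: nat
  shows "(\<Sum>n\<in>{n \<in> gen_semigroup P. n \<le> N}. moebius n * int (N div n)) =
         int (card {m\<in>{1..N}. prime_factors m \<inter> P = {}})"
proof -
  define B where "B = {n \<in> gen_semigroup P. n \<le> N}"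
  have "finite B" unfolding B_def by auto
  have "(\<Sum>n\<in>B. moebius n * int (N div n)) = (\<Sum>n\<in>B. \<Sum>m\<in>{1..N}. if n dvd m then moebius n else 0)"
  proof (rule sum.cong[OF refl])
    fix n assume "n \<in> B"
    then have "n > 0" unfolding B_def gen_semigroup_def by simp
    have "(\<Sum>m\<in>{1..N}. if n dvd m then moebius n else 0) = (\<Sum>m\<in>{m\<in>{1..N}. n dvd m}. moebius n)"
      by (rule sum.inter_filter[symmetric]) simp
    then show "moebius n * int (N div n) = (\<Sum>m\<in>{1..N}. if n dvd m then moebius n else 0)"
      using card_multiples_atLeastAtMost[OF \<open>n > 0\<close>, of N] by simp
  qed
  also have "\<dots> = (\<Sum>m\<in>{1..N}. \<Sum>n\<in>B. if n dvd m then moebius n else 0)"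
    by (rule sum.swap)
  also have "\<dots> = (\<Sum>m\<in>{1..N}. if prime_factors m \<inter> P = {} then 1 else 0)"
  proof (rule sum.cong[OF refl])
    fix m assume m: "m \<in> {1..N}"
    have "{n\<in>B. n dvd m} = {n. n dvd m \<and> prime_factors n \<subseteq> P}"
      using m by (auto simp: B_def gen_semigroup_def dest: dvd_imp_le)
    then show "(\<Sum>n\<in>B. if n dvd m then moebius n else 0) = (if prime_factors m \<inter> P = {} then 1 else 0)"
      using m sum_moebius_dvd_supported[of m P] \<open>finite B\<close> by (simp add: sum.inter_filter[symmetric])
  qed
  also have "\<dots> = (\<Sum>m\<in>{m\<in>{1..N}. prime_factors m \<inter> P = {}}. 1)"
    by (rule sum.inter_filter[symmetric]) simp
  finally show ?thesis unfolding B_def by simp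
qed

lemma real_div_eq_div_plus_mod:
  fixes N n :: nat
  assumes "n > 0"
  shows "real N / real n = real (N div n) + real (N mod n) / real n"
proof -
  have "real N = real n * real (N div n) + real (N mod n)"
    by (metis div_mult_mod_eq mult.commute of_nat_add of_nat_mult)
  then show ?thesis using assms by (simp add: field_simps)
qed

lemma abs_sum_moebius_mod_div_le_card:
  fixes A :: "nat set" and N :: nat
  assumes "0 \<notin> A"
  shows "\<bar>\<Sum>n\<in>A. real_of_int (moebius n) * (real (N mod n) / real n)\<bar> \<le> real (card A)"
proof -
  have "\<bar>\<Sum>n\<in>A. real_of_int (moebius n) * (real (N mod n) / real n)\<bar> \<le> (\<Sum>n\<in>A. 1)"
  proof (rule order.trans[OF sum_abs sum_mono])
    fix n assume "n \<in> A"
    then have "real (N mod n) / real n \<le> 1" using assms by (cases "n = 0") simp_all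
    moreover have "\<bar>real_of_int (moebius n)\<bar> \<le> 1" by (simp add: moebius_def)
    ultimately show "\<bar>real_of_int (moebius n) * (real (N mod n) / real n)\<bar> \<le> 1"
      unfolding abs_mult by (intro mult_le_one) auto
  qed
  then show ?thesis by simp
qed

lemma abs_sum_smooth_moebius_div_le_one:
  fixes N :: nat
  shows "\<bar>\<Sum>n\<in>{n \<in> gen_semigroup P. n \<le> N}. real_of_int (moebius n) / real n\<bar> \<le> 1"
proof (cases "N = 0")
  case True
  then show ?thesis by (simp add: gen_semigroup_def)
next
  case False
  define B where "B = {n \<in> gen_semigroup P. n \<le> N}"
  define C where "C = {m\<in>{1..N}. prime_factors m \<inter> P = {}}"
  define \<mu> where "\<mu> n = real_of_int (moebius n)" for n
  define E where "E = (\<Sum>n\<in>B - {1}. \<mu> n * (real (N mod n) / real n))"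
  have "finite B" "1 \<in> B" "0 \<notin> B" using False by (auto simp: B_def gen_semigroup_def)
  have "real N * (\<Sum>n\<in>B. \<mu> n / real n) = (\<Sum>n\<in>B. \<mu> n * (real N / real n))"
    by (simp add: sum_distrib_left mult.commute)
  also have "\<dots> = (\<Sum>n\<in>B. \<mu> n * real (N div n)) + (\<Sum>n\<in>B. \<mu> n * (real (N mod n) / real n))"
    unfolding sum.distrib[symmetric] using \<open>0 \<notin> B\<close>
    by (intro sum.cong refl) (metis real_div_eq_div_plus_mod distrib_left gr0I)
  also have "(\<Sum>n\<in>B. \<mu> n * real (N div n)) = real (card C)"
    using arg_cong[OF sum_moebius_mult_div[where P = P and N = N], of real_of_int]
    unfolding \<mu>_def B_def C_def by (simp add: of_int_sum)
  also have "(\<Sum>n\<in>B. \<mu> n * (real (N mod n) / real n)) = E"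
    unfolding E_def using \<open>finite B\<close> \<open>1 \<in> B\<close> by (simp add: sum.remove)
  finally have main: "real N * (\<Sum>n\<in>B. \<mu> n / real n) = real (card C) + E" .
  have "\<bar>E\<bar> \<le> real (card (B - {1}))"
    unfolding E_def \<mu>_def using \<open>0 \<notin> B\<close> by (intro abs_sum_moebius_mod_div_le_card) simp
  moreover have "real (card (B - {1})) + real (card C) \<le> real N"
    using card_smooth_plus_card_coprime_le[where P = P and N = N] unfolding B_def C_def by linarith
  ultimately have "\<bar>real N * (\<Sum>n\<in>B. \<mu> n / real n)\<bar> \<le> real N * 1"
    unfolding main by linarith
  then show ?thesis
    using False unfolding B_def \<mu>_def by (simp add: abs_mult)
qed

theorem theorem1p1:
  fixes P :: "nat set" and x :: real
  assumes "\<forall>p\<in>P. prime p"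
  shows "\<bar>\<Sum>n\<in>{n \<in> gen_semigroup P. real n \<le> x}. real_of_int (moebius n) / real n\<bar> \<le> 1"
proof -
  have "real n \<le> x \<longleftrightarrow> n \<le> nat \<lfloor>x\<rfloor>" if "n > 0" for n
    using that le_nat_floor of_nat_floor[of x] by fastforce
  then have "{n \<in> gen_semigroup P. real n \<le> x} = {n \<in> gen_semigroup P. n \<le> nat \<lfloor>x\<rfloor>}"
    by (auto simp: gen_semigroup_def)
  then show ?thesis using abs_sum_smooth_moebius_div_le_one by simp
qed

end
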